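(* Let $(x'_n,y'_n)_{n\in\mathbb Z}$ be an elliptic sequence in general position on a biquadratic polynomial $F$, let $j_1<j_2$ be integers, $w_{j_1},\dots,w_{j_2}\in\mathbb C$, and $f(x)=\sum_{j=j_1}^{j_2}\dfrac{w_j}{x'_j-x}$. Let $A,C$ be polynomials and suppose that the rational function $y\mapsto A(y)(\mathcal Df)(y)-C(y)(\mathcal Mf)(y)$ is a polynomial. Then for $j=j_1,\dots,j_2-1$: $$\frac{w_{j+1}}{(y'_{j+1}-y'_j)X_2(x'_{j+1})}\left(\frac{A(y'_j)}{x'_{j+1}-x'_j}-\frac{C(y'_j)}2\right)=\frac{w_j}{(y'_j-y'_{j-1})X_2(x'_j)}\left(\frac{A(y'_j)}{x'_{j+1}-x'_j}+\frac{C(y'_j)}2\right).$$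
   Context: $F(x,y)=\sum_{i,j=0}^2c_{i,j}x^iy^j=Y_0(y)+xY_1(y)+x^2Y_2(y)=X_0(x)+yX_1(x)+y^2X_2(x)$. An elliptic sequence on $F$ is $(x_n,y_n)_{n\in\mathbb Z}$ such that for every $n$, $x_n,x_{n+1}$ are the two roots of $F(\cdot,y_n)$ and $y_{n-1},y_n$ the two roots of $F(x_n,\cdot)$; general position: the $x'_n$ distinct, the $y'_n$ distinct, $X_2,Y_2$ nonvanishing there. For a rational $f$ and a value $y$ with $x^\pm$ the two roots of $F(x,y)=0$: $(\mathcal Df)(y)=\frac{f(x^+)-f(x^-)}{x^+-x^-}$, $(\mathcal Mf)(y)=\frac{f(x^+)+f(x^-)}2$ (rational functions of $y$). *)

theory Defs
  imports Complex_Main "HOL-Computational_Algebra.Polynomial"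
begin

definition Fb :: "(nat \<Rightarrow> nat \<Rightarrow> complex) \<Rightarrow> complex \<Rightarrow> complex \<Rightarrow> complex" where
  "Fb c x y = (\<Sum>i\<le>2. \<Sum>j\<le>2. c i j * x ^ i * y ^ j)"

text \<open>F = X0(x) + y X1(x) + y^2 X2(x)\<close>
definition X2 :: "(nat \<Rightarrow> nat \<Rightarrow> complex) \<Rightarrow> complex \<Rightarrow> complex" where
  "X2 c x = (\<Sum>i\<le>2. c i 2 * x ^ i)"

text \<open>F = Y0(y) + x Y1(y) + x^2 Y2(y)\<close>
definition Y2 :: "(nat \<Rightarrow> nat \<Rightarrow> complex) \<Rightarrow> complex \<Rightarrow> complex" where
  "Y2 c y = (\<Sum>j\<le>2. c 2 j * y ^ j)"

definition elliptic_seq :: "(nat \<Rightarrow> nat \<Rightarrow> complex) \<Rightarrow> (int \<Rightarrow> complex) \<Rightarrow> (int \<Rightarrow> complex) \<Rightarrow> bool" where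
  "elliptic_seq c xs ys \<longleftrightarrow>
     (\<forall>n. {t. Fb c t (ys n) = 0} = {xs n, xs (n + 1)} \<and>
          {s. Fb c (xs n) s = 0} = {ys (n - 1), ys n})"

definition general_position :: "(nat \<Rightarrow> nat \<Rightarrow> complex) \<Rightarrow> (int \<Rightarrow> complex) \<Rightarrow> (int \<Rightarrow> complex) \<Rightarrow> bool" where
  "general_position c xs ys \<longleftrightarrow>
     inj xs \<and> inj ys \<and> (\<forall>n. X2 c (xs n) \<noteq> 0) \<and> (\<forall>n. Y2 c (ys n) \<noteq> 0)"

text \<open>D f and M f evaluated at y, given the two roots x1, x2 of F(.,y).\<close>
definition Dop :: "(complex \<Rightarrow> complex) \<Rightarrow> complex \<Rightarrow> complex \<Rightarrow> complex" where
  "Dop f x1 x2 = (f x1 - f x2) / (x1 - x2)"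

definition Mop :: "(complex \<Rightarrow> complex) \<Rightarrow> complex \<Rightarrow> complex \<Rightarrow> complex" where
  "Mop f x1 x2 = (f x1 + f x2) / 2"

text \<open>The rational function y \<mapsto> A(y) (Df)(y) - C(y) (Mf)(y) is a polynomial: it agrees with a
  polynomial P at every y where it is given by the defining formula, i.e. Y2(y) \<noteq> 0, the two
  roots of F(.,y) are distinct, and neither root lies in the pole set S of f.
  (These y form a cofinite set, so this is equality of rational functions.)\<close>
definition DM_is_poly :: "(nat \<Rightarrow> nat \<Rightarrow> complex) \<Rightarrow> complex poly \<Rightarrow> complex poly
    \<Rightarrow> (complex \<Rightarrow> complex) \<Rightarrow> complex set \<Rightarrow> bool" where
  "DM_is_poly c A C f S \<longleftrightarrow>
     (\<exists>P :: complex poly. \<forall>y x1 x2.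
        Y2 c y \<noteq> 0 \<longrightarrow> x1 \<noteq> x2 \<longrightarrow> Fb c x1 y = 0 \<longrightarrow> Fb c x2 y = 0 \<longrightarrow>
        x1 \<notin> S \<longrightarrow> x2 \<notin> S \<longrightarrow>
        poly A y * Dop f x1 x2 - poly C y * Mop f x1 x2 = poly P y)"

end

theory Submission
  imports Defs
begin

text \<open>
  Near y = y'(j) the two roots x1, x2 of F(., y) are distinct, and partial fractions give
  A Df - C Mf = sum_k w(k) N_k(y) / F(x'(k), y), with N_k built from A, C, Y1, Y2.
  Along the elliptic sequence F(x'(k), y) = X2(x'(k)) (y - y'(k-1)) (y - y'(k)), so only the
  terms k = j and k = j+1 have a pole at y'(j). The left side is a polynomial, hence these two
  residues cancel, and Vieta's formula Y1(y'(j)) = - Y2(y'(j)) (x'(j) + x'(j+1)) turns the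
  cancellation into the stated relation.
\<close>

lemma quadratic_Vieta:
  fixes a0 a1 a2 u v :: "'a::idom"
  assumes "u \<noteq> v" "a0 + u * a1 + u\<^sup>2 * a2 = 0" "a0 + v * a1 + v\<^sup>2 * a2 = 0"
  shows "a1 = - a2 * (u + v)" and "a0 = a2 * u * v"
proof -
  have "(u - v) * (a1 + a2 * (u + v)) = (a0 + u * a1 + u\<^sup>2 * a2) - (a0 + v * a1 + v\<^sup>2 * a2)"
    by (simp add: algebra_simps power2_eq_square)
  then have "a1 + a2 * (u + v) = 0"
    using assms by simp
  then show a1: "a1 = - a2 * (u + v)"
    by (simp add: eq_neg_iff_add_eq_0)
  show "a0 = a2 * u * v"
    using assms(2) unfolding a1 by (simp add: algebra_simps power2_eq_square eq_neg_iff_add_eq_0)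
qed

lemma quadratic_factor_by_roots:
  fixes a0 a1 a2 u v t :: "'a::idom"
  assumes "u \<noteq> v" "a0 + u * a1 + u\<^sup>2 * a2 = 0" "a0 + v * a1 + v\<^sup>2 * a2 = 0"
  shows "a0 + t * a1 + t\<^sup>2 * a2 = a2 * (t - u) * (t - v)"
  unfolding quadratic_Vieta[OF assms] by (simp add: algebra_simps power2_eq_square)

lemma quadratic_discriminant_by_roots:
  fixes a0 a1 a2 u v :: "'a::idom"
  assumes "u \<noteq> v" "a0 + u * a1 + u\<^sup>2 * a2 = 0" "a0 + v * a1 + v\<^sup>2 * a2 = 0"
  shows "a1\<^sup>2 - 4 * a0 * a2 = a2\<^sup>2 * (u - v)\<^sup>2"
  unfolding quadratic_Vieta[OF assms] by (simp add: algebra_simps power2_eq_square)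

lemma quadratic_distinct_roots_exist:
  fixes a0 a1 a2 :: complex
  assumes "a2 \<noteq> 0" "a1\<^sup>2 - 4 * a0 * a2 \<noteq> 0"
  obtains u v where "u \<noteq> v" "a0 + u * a1 + u\<^sup>2 * a2 = 0" "a0 + v * a1 + v\<^sup>2 * a2 = 0"
proof -
  define s where "s = csqrt (a1\<^sup>2 - 4 * a0 * a2)"
  have root: "a0 + x * a1 + x\<^sup>2 * a2 = 0" if "(2 * a2 * x + a1)\<^sup>2 = s\<^sup>2" for x
  proof -
    have "4 * a2 * (a0 + x * a1 + x\<^sup>2 * a2) = (2 * a2 * x + a1)\<^sup>2 - (a1\<^sup>2 - 4 * a0 * a2)"
      by (simp add: algebra_simps power2_eq_square)
    also have "\<dots> = 0"
      using that by (simp add: s_def)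
    finally show ?thesis
      using assms(1) by simp
  qed
  have "s \<noteq> 0"
    using assms(2) by (simp add: s_def)
  then show ?thesis
    using assms(1)
    by (intro that[of "(s - a1) / (2 * a2)" "(- s - a1) / (2 * a2)"] root)
       (auto simp: divide_cancel_right power2_eq_square)
qed

lemma simple_pole_coefficient_eq_0:
  fixes g r p :: "'a::real_normed_field \<Rightarrow> 'a"
  assumes "(g \<longlongrightarrow> a) (at y0)" "(r \<longlongrightarrow> b) (at y0)" "(p \<longlongrightarrow> l) (at y0)"
    and "\<forall>\<^sub>F y in at y0. p y = g y / (y - y0) + r y"
  shows "a = 0"
proof -
  have "\<forall>\<^sub>F y in at y0. (y - y0) * (p y - r y) = g y"
    using assms(4) eventually_neq_at_within[of y0 y0 UNIV]
    by eventually_elim simp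
  moreover have "((\<lambda>y. (y - y0) * (p y - r y)) \<longlongrightarrow> (y0 - y0) * (l - b)) (at y0)"
    using assms(2,3) by (intro tendsto_intros)
  ultimately have "(g \<longlongrightarrow> 0) (at y0)"
    by (simp add: tendsto_cong)
  then show "a = 0"
    using tendsto_unique[OF at_neq_bot assms(1)] by simp
qed

lemma Dop_sum: "Dop (\<lambda>x. \<Sum>k\<in>I. g k x) x1 x2 = (\<Sum>k\<in>I. Dop (g k) x1 x2)"
  by (simp add: Dop_def sum_subtractf sum_divide_distrib[symmetric])

lemma Mop_sum: "Mop (\<lambda>x. \<Sum>k\<in>I. g k x) x1 x2 = (\<Sum>k\<in>I. Mop (g k) x1 x2)"
  by (simp add: Mop_def sum.distrib sum_divide_distrib[symmetric])

lemma Dop_Cauchy_kernel: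
  assumes "x1 \<noteq> x2" "a \<noteq> x1" "a \<noteq> x2"
  shows "Dop (\<lambda>x. w / (a - x)) x1 x2 = w / ((a - x1) * (a - x2))"
proof -
  have "a - x1 \<noteq> 0" "a - x2 \<noteq> 0" "x1 - x2 \<noteq> 0"
    using assms by auto
  then have "w / (a - x1) - w / (a - x2) = w * (x1 - x2) / ((a - x1) * (a - x2))"
    by (simp add: field_simps)
  then show ?thesis
    using \<open>x1 - x2 \<noteq> 0\<close> by (simp add: Dop_def)
qed

lemma Mop_Cauchy_kernel:
  assumes "a \<noteq> x1" "a \<noteq> x2"
  shows "Mop (\<lambda>x. w / (a - x)) x1 x2 = w * (a - (x1 + x2) / 2) / ((a - x1) * (a - x2))"
  using assms by (simp add: Mop_def field_simps)

definition X0 :: "(nat \<Rightarrow> nat \<Rightarrow> complex) \<Rightarrow> complex \<Rightarrow> complex" where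
  "X0 c x = (\<Sum>i\<le>2. c i 0 * x ^ i)"

definition X1 :: "(nat \<Rightarrow> nat \<Rightarrow> complex) \<Rightarrow> complex \<Rightarrow> complex" where
  "X1 c x = (\<Sum>i\<le>2. c i 1 * x ^ i)"

definition Y0 :: "(nat \<Rightarrow> nat \<Rightarrow> complex) \<Rightarrow> complex \<Rightarrow> complex" where
  "Y0 c y = (\<Sum>j\<le>2. c 0 j * y ^ j)"

definition Y1 :: "(nat \<Rightarrow> nat \<Rightarrow> complex) \<Rightarrow> complex \<Rightarrow> complex" where
  "Y1 c y = (\<Sum>j\<le>2. c 1 j * y ^ j)"

lemma Fb_eq_Y: "Fb c x y = Y0 c y + x * Y1 c y + x\<^sup>2 * Y2 c y"
  by (simp add: Fb_def Y0_def Y1_def Y2_def numeral_2_eq_2 algebra_simps)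

lemma Fb_eq_X: "Fb c x y = X0 c x + y * X1 c x + y\<^sup>2 * X2 c x"
  by (simp add: Fb_def X0_def X1_def X2_def numeral_2_eq_2 algebra_simps)

lemma isCont_Y:
  shows isCont_Y0: "isCont (Y0 c) y" and isCont_Y1: "isCont (Y1 c) y" and isCont_Y2: "isCont (Y2 c) y"
  unfolding Y0_def Y1_def Y2_def by (intro continuous_intros)+

lemma isCont_Fb: "isCont (Fb c x) y"
  unfolding Fb_eq_Y[abs_def] by (intro continuous_intros isCont_Y)

definition DM_numerator ::
    "(nat \<Rightarrow> nat \<Rightarrow> complex) \<Rightarrow> complex poly \<Rightarrow> complex poly \<Rightarrow> complex \<Rightarrow> complex \<Rightarrow> complex" where
  "DM_numerator c A C a y = poly A y * Y2 c y - poly C y * (a * Y2 c y + Y1 c y / 2)"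

lemma isCont_DM_numerator: "isCont (DM_numerator c A C a) y"
  unfolding DM_numerator_def[abs_def] by (intro continuous_intros isCont_Y) simp

lemma DM_Cauchy_kernel:
  assumes "Y2 c y \<noteq> 0" "x1 \<noteq> x2" "Fb c x1 y = 0" "Fb c x2 y = 0" "Fb c a y \<noteq> 0"
  shows "poly A y * Dop (\<lambda>x. w / (a - x)) x1 x2 - poly C y * Mop (\<lambda>x. w / (a - x)) x1 x2
    = w * DM_numerator c A C a y / Fb c a y"
proof -
  have roots: "Y0 c y + x1 * Y1 c y + x1\<^sup>2 * Y2 c y = 0" "Y0 c y + x2 * Y1 c y + x2\<^sup>2 * Y2 c y = 0"
    using assms(3,4) by (simp_all add: Fb_eq_Y)
  have F: "Fb c t y = Y2 c y * (t - x1) * (t - x2)" for t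
    unfolding Fb_eq_Y by (rule quadratic_factor_by_roots[OF assms(2) roots])
  have Y1: "Y1 c y = - Y2 c y * (x1 + x2)"
    by (rule quadratic_Vieta(1)[OF assms(2) roots])
  have "a \<noteq> x1" "a \<noteq> x2"
    using assms(5) by (auto simp: F)
  moreover have "a * Y2 c y + Y1 c y / 2 = Y2 c y * (a - (x1 + x2) / 2)"
    by (simp add: Y1 field_simps)
  moreover have "p * (w / Q) - q * (w * m / Q) = w * (p * Y2 c y - q * (Y2 c y * m)) / (Y2 c y * Q)"
    for p q m Q
    using assms(1) by (cases "Q = 0") (simp_all add: field_simps)
  ultimately show ?thesis
    using assms(2) by (simp add: Dop_Cauchy_kernel Mop_Cauchy_kernel DM_numerator_def F mult.assoc)
qed

lemma DM_Cauchy_sum: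
  assumes "Y2 c y \<noteq> 0" "x1 \<noteq> x2" "Fb c x1 y = 0" "Fb c x2 y = 0" "\<forall>k\<in>I. Fb c (a k) y \<noteq> 0"
  shows "poly A y * Dop (\<lambda>x. \<Sum>k\<in>I. w k / (a k - x)) x1 x2
      - poly C y * Mop (\<lambda>x. \<Sum>k\<in>I. w k / (a k - x)) x1 x2
    = (\<Sum>k\<in>I. w k * DM_numerator c A C (a k) y / Fb c (a k) y)"
  using assms
  by (simp add: Dop_sum Mop_sum sum_distrib_left sum_subtractf[symmetric] DM_Cauchy_kernel)

lemma eventually_two_distinct_roots:
  assumes "u \<noteq> v" "Fb c u y0 = 0" "Fb c v y0 = 0" "Y2 c y0 \<noteq> 0"
  shows "\<forall>\<^sub>F y in at y0. Y2 c y \<noteq> 0 \<and> (\<exists>x1 x2. x1 \<noteq> x2 \<and> Fb c x1 y = 0 \<and> Fb c x2 y = 0)"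
proof -
  define disc where "disc y = (Y1 c y)\<^sup>2 - 4 * Y0 c y * Y2 c y" for y
  have "disc y0 = (Y2 c y0)\<^sup>2 * (u - v)\<^sup>2"
    unfolding disc_def using assms(1-3)
    by (intro quadratic_discriminant_by_roots) (simp_all add: Fb_eq_Y)
  with assms(1,4) have "disc y0 \<noteq> 0"
    by simp
  moreover have "isCont disc y0"
    unfolding disc_def[abs_def] by (intro continuous_intros isCont_Y)
  ultimately have "\<forall>\<^sub>F y in at y0. disc y \<noteq> 0"
    by (intro tendsto_imp_eventually_ne) (simp_all add: isCont_def)
  moreover have "\<forall>\<^sub>F y in at y0. Y2 c y \<noteq> 0"
    using assms(4) isCont_Y2 by (intro tendsto_imp_eventually_ne) (simp_all add: isCont_def)
  ultimately show ?thesis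
  proof eventually_elim
    case (elim y)
    then obtain x1 x2 where "x1 \<noteq> x2" "Y0 c y + x1 * Y1 c y + x1\<^sup>2 * Y2 c y = 0"
        "Y0 c y + x2 * Y1 c y + x2\<^sup>2 * Y2 c y = 0"
      using quadratic_distinct_roots_exist[of "Y2 c y" "Y1 c y" "Y0 c y"] unfolding disc_def by blast
    with elim show ?case
      by (auto simp: Fb_eq_Y)
  qed
qed

lemma eventually_DM_eq_Cauchy_sum:
  assumes "u \<noteq> v" "Fb c u y0 = 0" "Fb c v y0 = 0" "Y2 c y0 \<noteq> 0" "finite I"
    and "\<forall>k\<in>I. \<forall>\<^sub>F y in at y0. Fb c (a k) y \<noteq> 0"
    and "DM_is_poly c A C (\<lambda>x. \<Sum>k\<in>I. w k / (a k - x)) (a ` I)"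
  obtains P where
    "\<forall>\<^sub>F y in at y0. poly P y = (\<Sum>k\<in>I. w k * DM_numerator c A C (a k) y / Fb c (a k) y)"
proof -
  obtain P where P: "\<And>y x1 x2. Y2 c y \<noteq> 0 \<Longrightarrow> x1 \<noteq> x2 \<Longrightarrow> Fb c x1 y = 0 \<Longrightarrow> Fb c x2 y = 0 \<Longrightarrow>
      x1 \<notin> a ` I \<Longrightarrow> x2 \<notin> a ` I \<Longrightarrow>
      poly A y * Dop (\<lambda>x. \<Sum>k\<in>I. w k / (a k - x)) x1 x2
        - poly C y * Mop (\<lambda>x. \<Sum>k\<in>I. w k / (a k - x)) x1 x2 = poly P y"
    using assms(7) unfolding DM_is_poly_def by blast
  have "\<forall>\<^sub>F y in at y0. (\<forall>k\<in>I. Fb c (a k) y \<noteq> 0)"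
    using assms(5,6) by (rule eventually_ball_finite)
  with eventually_two_distinct_roots[OF assms(1-4)]
  have "\<forall>\<^sub>F y in at y0. poly P y = (\<Sum>k\<in>I. w k * DM_numerator c A C (a k) y / Fb c (a k) y)"
  proof eventually_elim
    case (elim y)
    then have Y2: "Y2 c y \<noteq> 0" and poles: "\<forall>k\<in>I. Fb c (a k) y \<noteq> 0"
      by auto
    from elim obtain x1 x2 where roots: "x1 \<noteq> x2" "Fb c x1 y = 0" "Fb c x2 y = 0"
      by blast
    with poles have "x1 \<notin> a ` I" "x2 \<notin> a ` I"
      by auto
    then show ?case
      using P[OF Y2 roots] DM_Cauchy_sum[OF Y2 roots poles] by simp
  qed
  then show ?thesis
    by (rule that)
qed

locale elliptic_sequence =
  fixes c :: "nat \<Rightarrow> nat \<Rightarrow> complex" and xs ys :: "int \<Rightarrow> complex"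
  assumes elliptic: "elliptic_seq c xs ys" and general: "general_position c xs ys"
begin

lemma xs_eq_iff [simp]: "xs m = xs n \<longleftrightarrow> m = n"
  using general by (auto simp: general_position_def inj_eq)

lemma ys_eq_iff [simp]: "ys m = ys n \<longleftrightarrow> m = n"
  using general by (auto simp: general_position_def inj_eq)

lemma X2_xs_nonzero [simp]: "X2 c (xs n) \<noteq> 0"
  using general by (simp add: general_position_def)

lemma Y2_ys_nonzero [simp]: "Y2 c (ys n) \<noteq> 0"
  using general by (simp add: general_position_def)

lemma Fb_xs_ys_eq_0:
  shows "Fb c (xs n) (ys (n - 1)) = 0" and "Fb c (xs n) (ys n) = 0" and "Fb c (xs (n + 1)) (ys n) = 0"
  using elliptic unfolding elliptic_seq_def by (auto simp: set_eq_iff)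

lemma Fb_xs_factor: "Fb c (xs k) y = X2 c (xs k) * (y - ys (k - 1)) * (y - ys k)"
  unfolding Fb_eq_X
  by (rule quadratic_factor_by_roots) (use Fb_xs_ys_eq_0 in \<open>simp_all add: Fb_eq_X\<close>)

lemma Y1_ys: "Y1 c (ys j) = - Y2 c (ys j) * (xs j + xs (j + 1))"
  by (rule quadratic_Vieta(1)) (use Fb_xs_ys_eq_0 in \<open>simp_all add: Fb_eq_Y\<close>)

lemma eventually_Fb_xs_nonzero: "\<forall>\<^sub>F y in at y0. Fb c (xs k) y \<noteq> 0"
  using eventually_neq_at_within[of "ys (k - 1)" y0 UNIV] eventually_neq_at_within[of "ys k" y0 UNIV]
  by eventually_elim (simp add: Fb_xs_factor)

lemma residue_at_ys:
  assumes "finite I" "j \<in> I" "j + 1 \<in> I" "\<forall>k\<in>I. isCont (n k) (ys j)" "(p \<longlongrightarrow> l) (at (ys j))"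
    and "\<forall>\<^sub>F y in at (ys j). p y = (\<Sum>k\<in>I. n k y / Fb c (xs k) y)"
  shows "n j (ys j) / ((ys j - ys (j - 1)) * X2 c (xs j))
       = n (j + 1) (ys j) / ((ys (j + 1) - ys j) * X2 c (xs (j + 1)))"
proof -
  define g where "g y = n j y / ((y - ys (j - 1)) * X2 c (xs j))
      + n (j + 1) y / ((y - ys (j + 1)) * X2 c (xs (j + 1)))" for y
  define r where "r y = (\<Sum>k\<in>I - {j, j + 1}. n k y / Fb c (xs k) y)" for y
  have "(\<Sum>k\<in>I. n k y / Fb c (xs k) y) = g y / (y - ys j) + r y" for y
  proof -
    have "I - {j, j + 1} = I - {j} - {j + 1}" "j + 1 \<in> I - {j}"
      using assms(3) by auto
    then have "(\<Sum>k\<in>I. n k y / Fb c (xs k) y)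
        = n j y / Fb c (xs j) y + n (j + 1) y / Fb c (xs (j + 1)) y + r y"
      using assms(1,2) by (simp add: r_def sum.remove[of I j] sum.remove[of "I - {j}" "j + 1"])
    then show ?thesis
      by (simp add: g_def Fb_xs_factor add_divide_distrib mult_ac)
  qed
  moreover have "isCont g (ys j)"
    unfolding g_def[abs_def] using assms(2-4) by (intro continuous_intros) auto
  moreover have "isCont r (ys j)"
    unfolding r_def[abs_def] using assms(4)
    by (intro continuous_intros isCont_Fb) (auto simp: Fb_xs_factor)
  ultimately have "g (ys j) = 0"
    using assms(5,6)
    by (intro simple_pole_coefficient_eq_0[of g "g (ys j)" "ys j" r "r (ys j)" p l])
       (simp_all add: isCont_def)
  moreover have "n (j + 1) (ys j) / ((ys j - ys (j + 1)) * X2 c (xs (j + 1)))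
      = - (n (j + 1) (ys j) / ((ys (j + 1) - ys j) * X2 c (xs (j + 1))))"
    by (metis minus_diff_eq minus_divide_right mult_minus_left)
  ultimately show ?thesis
    by (simp add: g_def eq_neg_iff_add_eq_0)
qed

lemma DM_numerator_at_ys:
  shows "DM_numerator c A C (xs j) (ys j) / (Y2 c (ys j) * (xs (j + 1) - xs j))
      = poly A (ys j) / (xs (j + 1) - xs j) + poly C (ys j) / 2"
    and "DM_numerator c A C (xs (j + 1)) (ys j) / (Y2 c (ys j) * (xs (j + 1) - xs j))
      = poly A (ys j) / (xs (j + 1) - xs j) - poly C (ys j) / 2"
  by (simp_all add: DM_numerator_def Y1_ys field_simps)

lemma DM_poly_residue_relation:
  assumes "finite I" "j \<in> I" "j + 1 \<in> I"
    and "DM_is_poly c A C (\<lambda>x. \<Sum>k\<in>I. w k / (xs k - x)) (xs ` I)"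
  shows "w (j + 1) / ((ys (j + 1) - ys j) * X2 c (xs (j + 1)))
       * (poly A (ys j) / (xs (j + 1) - xs j) - poly C (ys j) / 2)
    = w j / ((ys j - ys (j - 1)) * X2 c (xs j))
       * (poly A (ys j) / (xs (j + 1) - xs j) + poly C (ys j) / 2)"
proof -
  obtain P where "\<forall>\<^sub>F y in at (ys j).
      poly P y = (\<Sum>k\<in>I. w k * DM_numerator c A C (xs k) y / Fb c (xs k) y)"
    by (rule eventually_DM_eq_Cauchy_sum[OF _ Fb_xs_ys_eq_0(2,3) Y2_ys_nonzero assms(1) _ assms(4)])
       (simp_all add: eventually_Fb_xs_nonzero)
  then have "w j * DM_numerator c A C (xs j) (ys j) / ((ys j - ys (j - 1)) * X2 c (xs j))
      = w (j + 1) * DM_numerator c A C (xs (j + 1)) (ys j) / ((ys (j + 1) - ys j) * X2 c (xs (j + 1)))"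
    using assms(1-3) isCont_DM_numerator
    by (intro residue_at_ys[where p = "poly P" and l = "poly P (ys j)"])
       (auto intro: continuous_intros tendsto_intros)
  moreover have "u / E * (N / K) = u * N / E / K" for u E N K :: complex
    by simp
  ultimately show ?thesis
    by (simp only: DM_numerator_at_ys[symmetric])
qed

end

theorem mainTheorem13:
  fixes c :: "nat \<Rightarrow> nat \<Rightarrow> complex"
    and xs ys :: "int \<Rightarrow> complex"
    and j1 j2 :: int
    and w :: "int \<Rightarrow> complex"
    and f :: "complex \<Rightarrow> complex"
    and A C :: "complex poly"
  assumes ell: "elliptic_seq c xs ys"
    and gp: "general_position c xs ys"
    and jj: "j1 < j2"
    and f_def: "\<And>x. f x = (\<Sum>j = j1..j2. w j / (xs j - x))"
    and hpoly: "DM_is_poly c A C f (xs ` {j1..j2})"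
  shows "\<forall>j \<in> {j1..j2 - 1}.
     w (j + 1) / ((ys (j + 1) - ys j) * X2 c (xs (j + 1)))
       * (poly A (ys j) / (xs (j + 1) - xs j) - poly C (ys j) / 2)
   = w j / ((ys j - ys (j - 1)) * X2 c (xs j))
       * (poly A (ys j) / (xs (j + 1) - xs j) + poly C (ys j) / 2)"
proof -
  interpret elliptic_sequence c xs ys
    using ell gp by unfold_locales
  have "f = (\<lambda>x. \<Sum>k = j1..j2. w k / (xs k - x))"
    using f_def by auto
  then show ?thesis
    using hpoly by (intro ballI DM_poly_residue_relation) auto
qed

end
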